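(* Let $d\ge 1$, $\bar{\alpha}>2$ and $\beta_k>0$. Consider the hierarchical model for a random vector $\mathbf{x}_k\in\mathbb{R}^d$ in which $\gamma_k>0$ follows a Gamma distribution with shape $\bar{\alpha}$ and rate $\beta_k$ (density $\frac{\beta_k^{\bar\alpha}}{\Gamma(\bar\alpha)}\gamma_k^{\bar\alpha-1}e^{-\beta_k\gamma_k}$), and, conditionally on $\gamma_k$, $\mathbf{x}_k$ has the density $p(\mathbf{x}_k\mid\gamma_k)=\left(\frac{\gamma_k}{2}\right)^d\exp\left(-\gamma_k\|\mathbf{x}_k\|_1\right)$, where $\|\mathbf{x}_k\|_1=\sum_{i=1}^d|x_{k,i}|$. Then the marginal density of $\mathbf{x}_k$ satisfies $p(\mathbf{x}_k)\propto(\|\mathbf{x}_k\|_1+\beta_k)^{-(d+\bar\alpha)}$, and $$\mathbb{E}\left[\mathbf{x}_k\mathbf{x}_k^\top\right]=\frac{2\beta_k^2}{(\bar\alpha-1)(\bar\alpha-2)}I_d .$$ Consequently, for given $\mathrm{SNR}>1$, positive semidefinite nonzero $\Gamma_\xi\in\mathbb{R}^{m\times m}$, integer $q\ge1$ and nonzero $L_k\in\mathbb{R}^{m\times d}$, the requirement $\mathbb{E}[\mathbf{x}_k\mathbf{x}_k^\top]=\theta_k I_d$ with $\theta_k=\frac{(\mathrm{SNR}-1)\,\mathrm{trace}(\Gamma_\xi)}{q\|L_k\|_F^2}$ holds if and only if $$\beta_k=\sqrt{\frac{(\bar\alpha-1)(\bar\alpha-2)(\mathrm{SNR}-1)\,\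mathrm{trace}(\Gamma_\xi)}{2q\|L_k\|_F^2}}.$$
   Context: $\|\cdot\|_F$ denotes the Frobenius norm and $I_d$ the $d\times d$ identity matrix. In the application, $L_k$ is the block of $d$ columns of an EEG lead field matrix associated with source location $k$, $\Gamma_\xi$ is the measurement noise covariance, $q$ is the number of active sources, and $\theta_k$ is the prior variance prescribed by a signal-to-noise-ratio-based sensitivity weighting. *)

theory Defs
  imports "HOL-Analysis.Analysis"
begin

text \<open>Vectors in R^d are modelled as real^'d, matrices in R^(m x d) as real^'d^'m
  (m rows indexed by 'm, d columns indexed by 'd).\<close>

definition l1norm :: "real^'d \<Rightarrow> real" where
  "l1norm x = (\<Sum>i\<in>UNIV. \<bar>x $ i\<bar>)"

definition gamma_density :: "real \<Rightarrow> real \<Rightarrow> real \<Rightarrow> real" where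
  "gamma_density a b g = (if 0 < g then b powr a / Gamma a * g powr (a - 1) * exp (- b * g) else 0)"

definition cond_density :: "real \<Rightarrow> real^'d \<Rightarrow> real" where
  "cond_density g x = (g / 2) ^ CARD('d) * exp (- g * l1norm x)"

definition marginal_density :: "real \<Rightarrow> real \<Rightarrow> real^'d \<Rightarrow> real" where
  "marginal_density a b x = (\<integral>g. gamma_density a b g * cond_density g x \<partial>lborel)"

definition second_moment :: "real \<Rightarrow> real \<Rightarrow> 'd::finite \<Rightarrow> 'd \<Rightarrow> real" where
  "second_moment a b i j = (\<integral>x. (x $ i) * (x $ j) * marginal_density a b x \<partial>(lborel :: (real^'d) measure))"

definition second_moment_integrable :: "real \<Rightarrow> real \<Rightarrow> 'd::finite \<Rightarrow> 'd \<Rightarrow> bool" where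
  "second_moment_integrable a b i j =
     integrable (lborel :: (real^'d) measure) (\<lambda>x. (x $ i) * (x $ j) * marginal_density a b x)"

definition psd_matrix :: "real^'m^'m \<Rightarrow> bool" where
  "psd_matrix A \<longleftrightarrow> transpose A = A \<and> (\<forall>v. 0 \<le> v \<bullet> (A *v v))"

definition frob_norm :: "real^'n^'m \<Rightarrow> real" where
  "frob_norm A = sqrt (\<Sum>i\<in>UNIV. \<Sum>j\<in>UNIV. (A $ i $ j)^2)"

end

theory Submission
  imports Defs
begin

(* Given gamma, the coordinates of x are independent Laplace variables with density
   (gamma/2) exp(-gamma |t|), so moments of p(x | gamma) factor over the coordinates:
   E[x_i x_j | gamma] = 2 delta_ij / gamma^2. Times the Gamma density, p(x | gamma) is a constant
   multiple of the kernel gamma^(alpha+d-1) exp(-(beta + |x|_1) gamma), whose integral is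
   Gamma(alpha+d) / (beta + |x|_1)^(alpha+d). Exchanging the two integrations (Fubini, justified
   by the same computation for |x_i x_j|) gives E[x x^T] = 2 E[gamma^-2] I, and
   E[gamma^-2] = beta^2 / ((alpha-1)(alpha-2)). *)

lemma has_bochner_integral_gamma_kernel:
  fixes c r :: real
  assumes c: "c > 0" and r: "r > 0"
  shows "has_bochner_integral lborel (\<lambda>g. indicator {0<..} g * (g powr (c - 1) * exp (- r * g)))
           (Gamma c / r powr c)"
proof -
  let ?k = "\<lambda>g::real. indicator {0<..} g * (g powr (c - 1) * exp (- g))"
  have "(\<integral>\<^sup>+t. ennreal (?k t) \<partial>lborel) = ennreal (Gamma c)"
    unfolding Gamma_conv_nn_integral_real[OF c]
    by (intro nn_integral_cong) (auto simp: indicator_def exp_minus field_simps)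
  then have "has_bochner_integral lborel ?k (Gamma c)"
    using Gamma_real_pos[OF c] by (intro has_bochner_integral_nn_integral) auto
  then have "has_bochner_integral lborel (\<lambda>g. ?k (0 + r * g)) (Gamma c /\<^sub>R \<bar>r\<bar>)"
    using r by (subst (asm) lborel_has_bochner_integral_real_affine_iff[of r _ _ 0]) simp_all
  then have "has_bochner_integral lborel (\<lambda>g. r powr (1 - c) * ?k (r * g)) (r powr (1 - c) * (Gamma c / r))"
    using r by (intro has_bochner_integral_mult_right) (simp add: divide_inverse mult.commute)
  moreover have "r powr (1 - c) * ?k (r * g) = indicator {0<..} g * (g powr (c - 1) * exp (- r * g))" for g
    using r by (auto simp: indicator_def powr_mult zero_less_mult_iff powr_diff field_simps)
  moreover have "r powr (1 - c) * (Gamma c / r) = Gamma c / r powr c"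
    using r by (simp add: powr_diff)
  ultimately show ?thesis by simp
qed

lemma has_bochner_integral_power_exp_half_line:
  fixes g :: real
  assumes g: "g > 0"
  shows "has_bochner_integral lborel (\<lambda>t. indicator {0<..} t * (t ^ n * exp (- g * t))) (fact n / g ^ Suc n)"
proof -
  have "has_bochner_integral lborel
      (\<lambda>t. indicator {0<..} t * (t powr (real (Suc n) - 1) * exp (- g * t)))
      (Gamma (real (Suc n)) / g powr real (Suc n))"
    using g by (intro has_bochner_integral_gamma_kernel) auto
  moreover have "(\<lambda>t. indicator {0<..} t * (t powr (real (Suc n) - 1) * exp (- g * t)))
      = (\<lambda>t. indicator {0<..} t * (t ^ n * exp (- g * t)))"
    by (auto simp: fun_eq_iff indicator_def powr_realpow)
  moreover have "Gamma (real (Suc n)) / g powr real (Suc n) = fact n / g ^ Suc n"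
    using g by (simp add: powr_realpow del: of_nat_Suc) (simp add: Gamma_fact)
  ultimately show ?thesis by simp
qed

lemma has_bochner_integral_laplace_moment:
  fixes g :: real
  assumes g: "g > 0"
  shows "has_bochner_integral lborel (\<lambda>t. t ^ n * (g / 2 * exp (- g * \<bar>t\<bar>)))
           (if even n then fact n / g ^ n else 0)"
    and "has_bochner_integral lborel (\<lambda>t. \<bar>t\<bar> ^ n * (g / 2 * exp (- g * \<bar>t\<bar>))) (fact n / g ^ n)"
proof -
  define h where "h t = indicator {0<..} t * (t ^ n * exp (- g * t))" for t :: real
  define I where "I = fact n / g ^ Suc n"
  have half: "has_bochner_integral lborel h I"
    unfolding h_def I_def using g by (rule has_bochner_integral_power_exp_half_line)
  then have mirrored: "has_bochner_integral lborel (\<lambda>t. h (- t)) I"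
    by (subst (asm) lborel_has_bochner_integral_real_affine_iff[of "-1" _ _ 0]) simp_all
  have "t ^ n * exp (- g * \<bar>t\<bar>) = h t + (-1) ^ n * h (- t)
      \<and> \<bar>t\<bar> ^ n * exp (- g * \<bar>t\<bar>) = h t + h (- t)" if "t \<noteq> 0" for t
  proof (cases "t > 0")
    case False
    with that have "t < 0" by simp
    moreover have "(-1) ^ n * (- t) ^ n = t ^ n"
      by (simp flip: power_mult_distrib)
    ultimately show ?thesis
      by (simp add: h_def mult.assoc[symmetric])
  qed (simp add: h_def)
  then have signed: "AE t in lborel. t ^ n * exp (- g * \<bar>t\<bar>) = h t + (-1) ^ n * h (- t)"
    and absolute: "AE t in lborel. \<bar>t\<bar> ^ n * exp (- g * \<bar>t\<bar>) = h t + h (- t)"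
    using AE_lborel_singleton[of 0] by (auto elim!: eventually_mono)
  have "has_bochner_integral lborel (\<lambda>t. g / 2 * (h t + (-1) ^ n * h (- t))) (g / 2 * (I + (-1) ^ n * I))"
    by (intro has_bochner_integral_mult_right has_bochner_integral_add half mirrored)
  moreover have "g / 2 * (I + (-1) ^ n * I) = (if even n then fact n / g ^ n else 0)"
    using g by (simp add: I_def)
  ultimately show "has_bochner_integral lborel (\<lambda>t. t ^ n * (g / 2 * exp (- g * \<bar>t\<bar>)))
      (if even n then fact n / g ^ n else 0)"
    using signed by (subst has_bochner_integral_cong_AE) (auto elim!: eventually_mono)
  have "has_bochner_integral lborel (\<lambda>t. g / 2 * (h t + h (- t))) (g / 2 * (I + I))"
    by (intro has_bochner_integral_mult_right has_bochner_integral_add half mirrored)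
  moreover have "g / 2 * (I + I) = fact n / g ^ n"
    using g by (simp add: I_def)
  ultimately show "has_bochner_integral lborel (\<lambda>t. \<bar>t\<bar> ^ n * (g / 2 * exp (- g * \<bar>t\<bar>))) (fact n / g ^ n)"
    using absolute by (subst has_bochner_integral_cong_AE) (auto elim!: eventually_mono)
qed

lemma has_bochner_integral_prod_Basis:
  fixes f :: "'a::euclidean_space \<Rightarrow> real \<Rightarrow> real"
  assumes f: "\<And>b. b \<in> Basis \<Longrightarrow> has_bochner_integral lborel (f b) (I b)"
  shows "has_bochner_integral lborel (\<lambda>x::'a. \<Prod>b\<in>Basis. f b (x \<bullet> b)) (\<Prod>b\<in>Basis. I b)"
proof -
  interpret product_sigma_finite "\<lambda>_::'a. lborel::real measure" by standard
  let ?e = "\<lambda>F. \<Sum>b\<in>Basis. F b *\<^sub>R (b::'a)"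
  have e_meas: "?e \<in> measurable (\<Pi>\<^sub>M b\<in>Basis. lborel) borel"
    by measurable
  have [measurable]: "f b \<in> borel_measurable borel" if "b \<in> Basis" for b
    using borel_measurable_integrable[OF integrable.intros[OF f[OF that]]] by simp
  have prod_meas: "(\<lambda>x::'a. \<Prod>b\<in>Basis. f b (x \<bullet> b)) \<in> borel_measurable borel"
    by measurable
  have coords: "(\<Prod>b\<in>Basis. f b (?e F \<bullet> b)) = (\<Prod>b\<in>Basis. f b (F b))" for F
    by (intro prod.cong) (simp_all add: inner_sum_left inner_Basis if_distrib cong: if_cong)
  have "integrable (\<Pi>\<^sub>M b\<in>Basis. lborel) (\<lambda>F. \<Prod>b\<in>Basis. f b (F b))"
    and "(\<integral>F. (\<Prod>b\<in>Basis. f b (F b)) \<partial>(\<Pi>\<^sub>M b\<in>Basis. lborel)) = (\<Prod>b\<in>Basis. I b)"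
    using f by (auto intro!: product_integrable_prod simp: product_integral_prod has_bochner_integral_iff)
  then show ?thesis
    unfolding has_bochner_integral_iff lborel_eq[where 'a='a]
    by (simp add: integrable_distr_eq[OF e_meas prod_meas] integral_distr[OF e_meas prod_meas] coords)
qed

lemma has_bochner_integral_prod_vec:
  fixes f :: "'n::finite \<Rightarrow> real \<Rightarrow> real"
  assumes f: "\<And>k. has_bochner_integral lborel (f k) (I k)"
  shows "has_bochner_integral lborel (\<lambda>x::real^'n. \<Prod>k\<in>UNIV. f k (x $ k)) (\<Prod>k\<in>UNIV. I k)"
proof -
  let ?ax = "\<lambda>k::'n. axis k (1::real)"
  have inj: "inj ?ax"
    by (auto simp: inj_on_def axis_eq_axis)
  have Basis_eq: "(Basis :: (real^'n) set) = range ?ax"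
    by (auto simp: Basis_vec_def)
  have reindex: "(\<Prod>b\<in>Basis. F b) = (\<Prod>k\<in>UNIV. F (?ax k))" for F :: "real^'n \<Rightarrow> real"
    by (simp add: Basis_eq prod.reindex[OF inj])
  define F where "F b = f (inv ?ax b)" for b
  define J where "J b = I (inv ?ax b)" for b
  have "has_bochner_integral lborel (\<lambda>x::real^'n. \<Prod>b\<in>Basis. F b (x \<bullet> b)) (\<Prod>b\<in>Basis. J b)"
    by (rule has_bochner_integral_prod_Basis) (auto simp: Basis_eq F_def J_def inv_f_f[OF inj] f)
  then show ?thesis
    by (simp add: reindex F_def J_def inv_f_f[OF inj] cart_eq_inner_axis)
qed

lemma cond_density_eq_prod:
  "cond_density g (x::real^'d) = (\<Prod>k\<in>UNIV. g / 2 * exp (- g * \<bar>x $ k\<bar>))"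
  unfolding cond_density_def l1norm_def prod.distrib by (simp add: exp_sum sum_distrib_left)

lemma cond_density_nonneg: "g \<ge> 0 \<Longrightarrow> cond_density g x \<ge> 0"
  by (simp add: cond_density_def)

lemma has_bochner_integral_monomial_cond_density:
  fixes p :: "'d::finite \<Rightarrow> nat"
  assumes g: "g > 0"
  shows "has_bochner_integral lborel (\<lambda>x::real^'d. (\<Prod>k\<in>UNIV. (x $ k) ^ p k) * cond_density g x)
           (if \<forall>k. even (p k) then (\<Prod>k\<in>UNIV. fact (p k)) / g ^ (\<Sum>k\<in>UNIV. p k) else 0)"
    and "has_bochner_integral lborel (\<lambda>x::real^'d. (\<Prod>k\<in>UNIV. \<bar>x $ k\<bar> ^ p k) * cond_density g x)
           ((\<Prod>k\<in>UNIV. fact (p k)) / g ^ (\<Sum>k\<in>UNIV. p k))"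
proof -
  have factor: "(\<Prod>k\<in>UNIV. m k) * cond_density g x
      = (\<Prod>k\<in>UNIV. m k * (g / 2 * exp (- g * \<bar>x $ k\<bar>)))" for m and x :: "real^'d"
    by (simp only: cond_density_eq_prod prod.distrib)
  have moments: "(\<Prod>k\<in>UNIV. fact (p k) / g ^ p k) = (\<Prod>k\<in>UNIV. fact (p k)) / g ^ (\<Sum>k\<in>UNIV. p k)"
    by (simp add: prod_dividef power_sum)
  have "has_bochner_integral lborel
      (\<lambda>x::real^'d. \<Prod>k\<in>UNIV. (x $ k) ^ p k * (g / 2 * exp (- g * \<bar>x $ k\<bar>)))
          (\<Prod>k\<in>UNIV. if even (p k) then fact (p k) / g ^ p k else 0)"
    using g by (intro has_bochner_integral_prod_vec has_bochner_integral_laplace_moment)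
  moreover have "(\<Prod>k\<in>UNIV. if even (p k) then fact (p k) / g ^ p k else 0)
      = (if \<forall>k. even (p k) then (\<Prod>k\<in>UNIV. fact (p k)) / g ^ (\<Sum>k\<in>UNIV. p k) else 0)"
    by (auto simp: moments intro: prod_zero)
  ultimately show "has_bochner_integral lborel (\<lambda>x::real^'d. (\<Prod>k\<in>UNIV. (x $ k) ^ p k) * cond_density g x)
      (if \<forall>k. even (p k) then (\<Prod>k\<in>UNIV. fact (p k)) / g ^ (\<Sum>k\<in>UNIV. p k) else 0)"
    by (simp only: factor)
  have "has_bochner_integral lborel
      (\<lambda>x::real^'d. \<Prod>k\<in>UNIV. \<bar>x $ k\<bar> ^ p k * (g / 2 * exp (- g * \<bar>x $ k\<bar>)))
          (\<Prod>k\<in>UNIV. fact (p k) / g ^ p k)"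
    using g by (intro has_bochner_integral_prod_vec has_bochner_integral_laplace_moment)
  then show "has_bochner_integral lborel (\<lambda>x::real^'d. (\<Prod>k\<in>UNIV. \<bar>x $ k\<bar> ^ p k) * cond_density g x)
      ((\<Prod>k\<in>UNIV. fact (p k)) / g ^ (\<Sum>k\<in>UNIV. p k))"
    by (simp only: factor moments)
qed

lemma has_bochner_integral_second_moment_cond_density:
  fixes i j :: "'d::finite"
  assumes g: "g > 0"
  shows "has_bochner_integral lborel (\<lambda>x::real^'d. x $ i * x $ j * cond_density g x)
           ((if i = j then 2 else 0) / g\<^sup>2)"
    and "has_bochner_integral lborel (\<lambda>x::real^'d. \<bar>x $ i * x $ j\<bar> * cond_density g x)
           ((if i = j then 2 else 1) / g\<^sup>2)"
proof -
  define p :: "'d \<Rightarrow> nat" where "p k = of_bool (k = i) + of_bool (k = j)" for k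
  have power_p: "y ^ p k = (if k = i then y else 1) * (if k = j then y else 1)" for y :: real and k
    by (simp add: p_def power_add)
  have monomial: "(\<Prod>k\<in>UNIV. (x $ k) ^ p k) = x $ i * x $ j" for x :: "real^'d"
    by (simp add: power_p prod.distrib)
  have abs_monomial: "(\<Prod>k\<in>UNIV. \<bar>x $ k\<bar> ^ p k) = \<bar>x $ i * x $ j\<bar>" for x :: "real^'d"
    by (simp add: power_p prod.distrib abs_mult)
  have degree: "(\<Sum>k\<in>UNIV. p k) = 2"
    by (simp add: p_def sum.distrib)
  have facts: "(\<Prod>k\<in>UNIV. fact (p k) :: real) = (if i = j then 2 else 1)"
  proof -
    have "fact (p k) = (if k = i then if i = j then 2 else 1 else 1 :: real)" for k
      by (auto simp: p_def)
    then show ?thesis by (simp add: prod.delta)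
  qed
  have even: "(\<forall>k. even (p k)) \<longleftrightarrow> i = j"
    by (auto simp: p_def)
  show "has_bochner_integral lborel (\<lambda>x::real^'d. x $ i * x $ j * cond_density g x)
      ((if i = j then 2 else 0) / g\<^sup>2)"
    using has_bochner_integral_monomial_cond_density(1)[OF g, of p]
    unfolding monomial degree facts even by (cases "i = j") simp_all
  show "has_bochner_integral lborel (\<lambda>x::real^'d. \<bar>x $ i * x $ j\<bar> * cond_density g x)
      ((if i = j then 2 else 1) / g\<^sup>2)"
    using has_bochner_integral_monomial_cond_density(2)[OF g, of p]
    unfolding abs_monomial degree facts .
qed

lemma powr_eq_powr_minus_two_mult_square:
  fixes x s :: real
  assumes "x > 0"
  shows "x powr s = x powr (s - 2) * x\<^sup>2"
proof -
  have "x powr (s - 2) * x\<^sup>2 = x powr (s - 2) * x powr 2"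
    using assms by simp
  also have "\<dots> = x powr s"
    by (simp flip: powr_add)
  finally show ?thesis ..
qed

lemma Gamma_eq_shift_two:
  fixes a :: real
  assumes "a > 2"
  shows "Gamma a = (a - 1) * (a - 2) * Gamma (a - 2)"
proof -
  have "Gamma (a - 2 + 1) = (a - 2) * Gamma (a - 2)" "Gamma (a - 1 + 1) = (a - 1) * Gamma (a - 1)"
    using assms by (intro Gamma_plus1; auto elim!: nonpos_Ints_cases)+
  then show ?thesis by simp
qed

lemma gamma_density_mult_cond_density_nonneg:
  "a > 0 \<Longrightarrow> gamma_density a b g * cond_density g x \<ge> 0"
  by (cases "g > 0") (simp_all add: gamma_density_def cond_density_nonneg)

lemma has_bochner_integral_gamma_density_div_square:
  fixes a b :: real
  assumes a: "a > 2" and b: "b > 0"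
  shows "has_bochner_integral lborel (\<lambda>g. gamma_density a b g / g\<^sup>2) (b\<^sup>2 / ((a - 1) * (a - 2)))"
proof -
  have "has_bochner_integral lborel
      (\<lambda>g. b powr a / Gamma a * (indicator {0<..} g * (g powr (a - 2 - 1) * exp (- b * g))))
      (b powr a / Gamma a * (Gamma (a - 2) / b powr (a - 2)))"
    using a b by (intro has_bochner_integral_mult_right has_bochner_integral_gamma_kernel) auto
  moreover have "b powr a / Gamma a * (indicator {0<..} g * (g powr (a - 2 - 1) * exp (- b * g)))
      = gamma_density a b g / g\<^sup>2" for g
    by (cases "g > 0")
      (simp_all add: gamma_density_def powr_eq_powr_minus_two_mult_square[of g "a - 1"])
  moreover have "b powr a / Gamma a * (Gamma (a - 2) / b powr (a - 2)) = b\<^sup>2 / ((a - 1) * (a - 2))"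
  proof -
    have "Gamma (a - 2) \<noteq> 0"
      using a Gamma_real_pos[of "a - 2"] by linarith
    with a b show ?thesis
      by (simp add: Gamma_eq_shift_two powr_eq_powr_minus_two_mult_square[of b a])
  qed
  ultimately show ?thesis by simp
qed

lemma marginal_density_eq:
  fixes x :: "real^'d"
  assumes a: "a > 0" and b: "b > 0"
  shows "marginal_density a b x = b powr a * Gamma (a + real CARD('d)) / (Gamma a * 2 ^ CARD('d))
           * (l1norm x + b) powr (- (real CARD('d) + a))"
proof -
  let ?d = "real CARD('d)"
  have l1: "l1norm x \<ge> 0"
    by (simp add: l1norm_def sum_nonneg)
  have kernel: "has_bochner_integral lborel
      (\<lambda>g. b powr a / (Gamma a * 2 ^ CARD('d))
             * (indicator {0<..} g * (g powr (a + ?d - 1) * exp (- (l1norm x + b) * g))))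
      (b powr a / (Gamma a * 2 ^ CARD('d)) * (Gamma (a + ?d) / (l1norm x + b) powr (a + ?d)))"
    using a b l1 by (intro has_bochner_integral_mult_right has_bochner_integral_gamma_kernel) auto
  have integrand: "b powr a / (Gamma a * 2 ^ CARD('d))
        * (indicator {0<..} g * (g powr (a + ?d - 1) * exp (- (l1norm x + b) * g)))
      = gamma_density a b g * cond_density g x" for g
  proof (cases "g > 0")
    case True
    then have "g powr (a + ?d - 1) = g powr (a - 1) * g ^ CARD('d)"
      by (simp add: powr_realpow[symmetric] powr_add[symmetric] algebra_simps)
    with True show ?thesis
      by (simp add: gamma_density_def cond_density_def power_divide exp_add[symmetric] algebra_simps)
  qed (simp add: gamma_density_def)
  have "marginal_density a b x
      = b powr a / (Gamma a * 2 ^ CARD('d)) * (Gamma (a + ?d) / (l1norm x + b) powr (a + ?d))"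
    using kernel unfolding integrand marginal_density_def by (rule has_bochner_integral_integral_eq)
  then show ?thesis
    by (subst powr_minus_divide) (simp add: add.commute)
qed

lemma borel_measurable_vec_nth [measurable]:
  "(\<lambda>x::'a::real_normed_vector^'n. x $ i) \<in> borel_measurable borel"
  by (intro borel_measurable_continuous_onI continuous_intros)

lemma has_bochner_integral_mixture:
  fixes F :: "'a \<Rightarrow> 'b \<Rightarrow> real" and \<phi> :: "'b \<Rightarrow> real"
  assumes "sigma_finite_measure M" "sigma_finite_measure N"
    and meas: "(\<lambda>(g, x). \<phi> x * F g x) \<in> borel_measurable (M \<Otimes>\<^sub>M N)"
    and nonneg: "\<And>g x. F g x \<ge> 0"
    and abs_moment: "\<And>g. has_bochner_integral N (\<lambda>x. \<bar>\<phi> x\<bar> * F g x) (A g)"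
    and moment: "\<And>g. has_bochner_integral N (\<lambda>x. \<phi> x * F g x) (B g)"
    and "integrable M A"
  shows "has_bochner_integral N (\<lambda>x. \<phi> x * (\<integral>g. F g x \<partial>M)) (\<integral>g. B g \<partial>M)"
proof -
  interpret pair_sigma_finite M N
    using assms(1,2) by (rule pair_sigma_finite.intro)
  have "(\<integral>x. norm (\<phi> x * F g x) \<partial>N) = A g" for g
    using abs_moment[of g] nonneg[of g] by (simp add: abs_mult has_bochner_integral_integral_eq)
  then have "integrable (M \<Otimes>\<^sub>M N) (\<lambda>(g, x). \<phi> x * F g x)"
    using moment \<open>integrable M A\<close>
    by (intro Fubini_integrable meas AE_I2) (auto intro: integrable.intros)
  moreover have "(\<integral>g. \<phi> x * F g x \<partial>M) = \<phi> x * (\<integral>g. F g x \<partial>M)" for x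
    by simp
  moreover have "(\<integral>x. \<phi> x * F g x \<partial>N) = B g" for g
    using moment by (rule has_bochner_integral_integral_eq)
  ultimately show ?thesis
    using integrable_snd[of "\<lambda>g x. \<phi> x * F g x"] integral_snd[of "\<lambda>g x. \<phi> x * F g x"]
      integral_fst[of "\<lambda>g x. \<phi> x * F g x"]
    by (simp add: has_bochner_integral_iff)
qed

lemma second_moment_eq:
  fixes i j :: "'d::finite"
  assumes a: "a > 2" and b: "b > 0"
  shows "second_moment_integrable a b i j"
    and "second_moment a b i j = (if i = j then 2 * b\<^sup>2 / ((a - 1) * (a - 2)) else 0)"
proof -
  let ?F = "\<lambda>g (x::real^'d). gamma_density a b g * cond_density g x"
  let ?w = "\<lambda>g. gamma_density a b g / g\<^sup>2"
  have conditional: "has_bochner_integral lborel (\<lambda>x. f x * ?F g x) (c * ?w g)"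
    if "\<And>g. g > 0 \<Longrightarrow> has_bochner_integral lborel (\<lambda>x. f x * cond_density g x) (c / g\<^sup>2)"
    for f c g
  proof (cases "g > 0")
    case True
    then show ?thesis
      using has_bochner_integral_mult_right[OF that[OF True], of "gamma_density a b g"]
      by (simp add: ac_simps)
  qed (simp add: gamma_density_def has_bochner_integral_zero)
  have "has_bochner_integral lborel (\<lambda>x::real^'d. x $ i * x $ j * (\<integral>g. ?F g x \<partial>lborel))
      (\<integral>g. (if i = j then 2 else 0) * ?w g \<partial>lborel)"
  proof (rule has_bochner_integral_mixture)
    show "(\<lambda>(g, x::real^'d). x $ i * x $ j * ?F g x) \<in> borel_measurable (lborel \<Otimes>\<^sub>M lborel)"
      unfolding gamma_density_def cond_density_def l1norm_def by measurable
    show "has_bochner_integral lborel (\<lambda>x. \<bar>x $ i * x $ j\<bar> * ?F g x) ((if i = j then 2 else 1) * ?w g)" for g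
      by (rule conditional has_bochner_integral_second_moment_cond_density)+
    show "has_bochner_integral lborel (\<lambda>x. x $ i * x $ j * ?F g x) ((if i = j then 2 else 0) * ?w g)" for g
      by (rule conditional has_bochner_integral_second_moment_cond_density)+
    show "integrable lborel (\<lambda>g. (if i = j then 2 else 1) * ?w g)"
      using has_bochner_integral_gamma_density_div_square[OF a b]
      by (intro integrable_mult_right integrable.intros)
  qed (use a in \<open>simp_all add: gamma_density_mult_cond_density_nonneg lborel.sigma_finite_measure_axioms\<close>)
  moreover have "(\<integral>g. (if i = j then 2 else 0) * ?w g \<partial>lborel)
      = (if i = j then 2 * b\<^sup>2 / ((a - 1) * (a - 2)) else 0)"
    using has_bochner_integral_mult_right[OF has_bochner_integral_gamma_density_div_square[OF a b]]
    by (simp add: has_bochner_integral_integral_eq)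
  ultimately show "second_moment_integrable a b i j"
    and "second_moment a b i j = (if i = j then 2 * b\<^sup>2 / ((a - 1) * (a - 2)) else 0)"
    by (simp_all add: second_moment_integrable_def second_moment_def marginal_density_def has_bochner_integral_iff)
qed

lemma pos_eq_sqrt_iff:
  fixes b y :: real
  assumes "b > 0"
  shows "b = sqrt y \<longleftrightarrow> b\<^sup>2 = y"
  using assms by (auto intro: real_sqrt_unique[symmetric])

lemma second_moment_eq_scaled_identity_iff:
  assumes a: "a > 2" and b: "b > 0"
  shows "(\<forall>i j::'d::finite. second_moment a b i j = (if i = j then \<theta> else 0))
           \<longleftrightarrow> b = sqrt ((a - 1) * (a - 2) * \<theta> / 2)"
proof -
  have "(\<forall>i j::'d. second_moment a b i j = (if i = j then \<theta> else 0))
      \<longleftrightarrow> 2 * b\<^sup>2 / ((a - 1) * (a - 2)) = \<theta>"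
    by (auto simp: second_moment_eq(2)[OF a b])
  also have "\<dots> \<longleftrightarrow> b\<^sup>2 = (a - 1) * (a - 2) * \<theta> / 2"
    using a by (simp add: divide_eq_eq eq_divide_eq ac_simps)
  finally show ?thesis
    using pos_eq_sqrt_iff[OF b] by simp
qed

theorem mainTheorem1:
  fixes a b SNR :: real and q :: nat
    and Gxi :: "real^'m^'m" and L :: "real^'d^'m"
  assumes a_gt: "a > 2" and b_pos: "b > 0"
  shows "(\<exists>C>0. \<forall>x::real^'d. marginal_density a b x = C * (l1norm x + b) powr (- (real CARD('d) + a)))
    \<and> (\<forall>i j::'d. second_moment_integrable a b i j \<and>
          second_moment a b i j = (if i = j then 2 * b^2 / ((a - 1) * (a - 2)) else 0))
    \<and> (SNR > 1 \<longrightarrow> psd_matrix Gxi \<longrightarrow> Gxi \<noteq> 0 \<longrightarrow> q \<ge> 1 \<longrightarrow> L \<noteq> 0 \<longrightarrow>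
        ((\<forall>i j::'d. second_moment a b i j =
            (if i = j then (SNR - 1) * trace Gxi / (real q * (frob_norm L)^2) else 0))
         \<longleftrightarrow> b = sqrt ((a - 1) * (a - 2) * (SNR - 1) * trace Gxi / (2 * real q * (frob_norm L)^2))))"
proof -
  define C where "C = b powr a * Gamma (a + real CARD('d)) / (Gamma a * 2 ^ CARD('d))"
  have "C > 0"
    unfolding C_def using a_gt b_pos by simp
  moreover have "marginal_density a b x = C * (l1norm x + b) powr (- (real CARD('d) + a))" for x :: "real^'d"
    unfolding C_def using a_gt b_pos by (simp add: marginal_density_eq)
  ultimately have density:
    "\<exists>C>0. \<forall>x::real^'d. marginal_density a b x = C * (l1norm x + b) powr (- (real CARD('d) + a))"
    by blast
  have threshold: "(a - 1) * (a - 2) * (SNR - 1) * trace Gxi / (2 * real q * (frob_norm L)\<^sup>2)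
      = (a - 1) * (a - 2) * ((SNR - 1) * trace Gxi / (real q * (frob_norm L)\<^sup>2)) / 2"
    by simp
  show ?thesis
    unfolding threshold second_moment_eq_scaled_identity_iff[where 'd='d, OF a_gt b_pos, symmetric]
    using density second_moment_eq[OF a_gt b_pos] by blast
qed
end
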